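(* Let $\mathcal{H}$ be a finite-dimensional complex Hilbert space, let $\ket{\psi_1},\ket{\psi_2}\in\mathcal{H}$ be pure states, and let $\alpha,\beta\in[0,1]$. For every ontological model (as defined in the context) for these two preparations, $$S^{Gam}_Q(\psi_1,\psi_2;\alpha,\beta)\le S^{Gam}_\Lambda(\psi_1,\psi_2;\alpha,\beta)=1-\frac{\omega_\Lambda(\psi_1,\psi_2;\alpha,\beta)}{2},$$ where $S^{Gam}_\Lambda(\psi_1,\psi_2;\alpha,\beta)=\tfrac12\int_\Lambda\max\big(\tilde\mu_1(\lambda),\tilde\mu_2(\lambda),\tilde\mu_3(\lambda)\big)d\lambda-\beta$ and $$\omega_\Lambda(\psi_1,\psi_2;\alpha,\beta)=T_1+T_2+T_3-T_4,$$ with $T_1=\int_\Lambda\min(\tilde\mu_1,\tilde\mu_2)d\lambda$, $T_2=\int_\Lambda\min(\tilde\mu_1,\tilde\mu_3)d\lambda-(\alpha+\beta)$, $T_3=\int_\Lambda\min(\tilde\mu_2,\tilde\mu_3)d\lambda-(\alpha+\beta)$, $T_4=\int_\Lambda\min(\tilde\mu_1,\tilde\mu_2,\tilde\mu_3)d\lambda$, and $\tilde\mu_1(\lambda)=(1+\beta)\mu(\lambda|\psi_1)$, $\tilde\mu_2(\lambda)=(1+\beta)\mu(\lambda|\psi_2)$, $\tilde\mu_3(\lambda)=(\alpha+\beta)\big(\mu(\lambda|\psi_1)+\mu(\lambda|\psi_2)\big)$.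
   Context: For a state $\sigma$ and POVM $\mathcal{M}=\{M_k\}$, $p(k|\sigma,\mathcal{M})=\mathrm{Tr}(\sigma M_k)$. Quantum gambling value: $S^{Gam}_Q(\psi_1,\psi_2;\alpha,\beta)=\tfrac12\max_{\mathcal{M}}\big(p(1|\psi_1,\mathcal{M})-\beta p(2|\psi_1,\mathcal{M})+\alpha p(3|\psi_1,\mathcal{M})+p(2|\psi_2,\mathcal{M})-\beta p(1|\psi_2,\mathcal{M})+\alpha p(3|\psi_2,\mathcal{M})\big)$, the maximum over all three-outcome POVMs $\mathcal{M}=\{M_1,M_2,M_3\}$ on $\mathcal{H}$. Ontological model: a measure space $(\Lambda,d\lambda)$; for each preparation $\psi_j$ ($j=1,2$) a probability density $\mu(\lambda|\psi_j)\ge 0$ with $\int_\Lambda\mu(\lambda|\psi_j)d\lambda=1$; for each $n$-outcome POVM $\mathcal{M}$ response functions $\xi(k|\lambda,\mathcal{M})\ge0$ with $\sum_k\xi(k|\lambda,\mathcal{M})=1$ for all $\lambda$; such that $\bra{\psi_j}M_k\ket{\psi_j}=\int_\Lambda\mu(\lambda|\psi_j)\xi(k|\lambda,\mathcal{M})d\lambda$ for all $j,\mathcal{M},k$. *)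

theory Defs
  imports "HOL-Analysis.Analysis" "HOL-Probability.Probability"
begin

definition cinner_vec :: "complex ^ 'n::finite \<Rightarrow> complex ^ 'n \<Rightarrow> complex" where
  "cinner_vec x y = (\<Sum>i\<in>UNIV. cnj (x $ i) * y $ i)"

definition expval :: "complex ^ 'n::finite \<Rightarrow> complex ^ 'n ^ 'n \<Rightarrow> complex" where
  "expval psi M = cinner_vec psi (M *v psi)"

definition pure_state :: "complex ^ 'n::finite \<Rightarrow> bool" where
  "pure_state psi \<longleftrightarrow> cinner_vec psi psi = 1"

definition psd :: "complex ^ 'n::finite ^ 'n \<Rightarrow> bool" where
  "psd M \<longleftrightarrow> (\<forall>v. Im (expval v M) = 0 \<and> Re (expval v M) \<ge> 0)"

text \<open>A POVM with n = length Ms outcomes; outcome k (1-based in the paper) is Ms ! (k-1).\<close>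
definition is_POVM :: "(complex ^ 'n::finite ^ 'n) list \<Rightarrow> bool" where
  "is_POVM Ms \<longleftrightarrow> (\<forall>M\<in>set Ms. psd M) \<and> sum_list Ms = mat 1"

definition prob :: "complex ^ 'n::finite \<Rightarrow> (complex ^ 'n ^ 'n) list \<Rightarrow> nat \<Rightarrow> real" where
  "prob psi Ms k = Re (expval psi (Ms ! (k - 1)))"

definition gamble_payoff ::
  "complex ^ 'n::finite \<Rightarrow> complex ^ 'n \<Rightarrow> real \<Rightarrow> real \<Rightarrow> (complex ^ 'n ^ 'n) list \<Rightarrow> real" where
  "gamble_payoff psi1 psi2 \<alpha> \<beta> Ms =
     prob psi1 Ms 1 - \<beta> * prob psi1 Ms 2 + \<alpha> * prob psi1 Ms 3
     + prob psi2 Ms 2 - \<beta> * prob psi2 Ms 1 + \<alpha> * prob psi2 Ms 3"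

definition S_Q_Gam :: "complex ^ 'n::finite \<Rightarrow> complex ^ 'n \<Rightarrow> real \<Rightarrow> real \<Rightarrow> real" where
  "S_Q_Gam psi1 psi2 \<alpha> \<beta> =
     (1/2) * Sup {gamble_payoff psi1 psi2 \<alpha> \<beta> Ms | Ms. is_POVM Ms \<and> length Ms = 3}"

text \<open>Ontological model on measure space L for preparations psi1, psi2, with densities
  mu1 = mu(.|psi1), mu2 = mu(.|psi2) and response functions xi Ms k lam = xi(k+1 | lam, Ms)
  (0-based outcome index k < length Ms).\<close>
definition ontological_model ::
  "'l measure \<Rightarrow> ('l \<Rightarrow> real) \<Rightarrow> ('l \<Rightarrow> real) \<Rightarrow>
   ((complex ^ 'n::finite ^ 'n) list \<Rightarrow> nat \<Rightarrow> 'l \<Rightarrow> real) \<Rightarrow>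
   complex ^ 'n \<Rightarrow> complex ^ 'n \<Rightarrow> bool" where
  "ontological_model L mu1 mu2 xi psi1 psi2 \<longleftrightarrow>
     (\<forall>mu\<in>{mu1, mu2}. mu \<in> borel_measurable L \<and> (\<forall>l\<in>space L. mu l \<ge> 0)
        \<and> integrable L mu \<and> integral\<^sup>L L mu = 1)
   \<and> (\<forall>Ms. is_POVM Ms \<longrightarrow>
        (\<forall>k<length Ms. xi Ms k \<in> borel_measurable L \<and> (\<forall>l\<in>space L. xi Ms k l \<ge> 0))
        \<and> (\<forall>l\<in>space L. (\<Sum>k<length Ms. xi Ms k l) = 1)
        \<and> (\<forall>k<length Ms.
             expval psi1 (Ms ! k) = complex_of_real (\<integral>l. mu1 l * xi Ms k l \<partial>L)
           \<and> expval psi2 (Ms ! k) = complex_of_real (\<integral>l. mu2 l * xi Ms k l \<partial>L)))"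

definition mu_t1 :: "('l \<Rightarrow> real) \<Rightarrow> real \<Rightarrow> 'l \<Rightarrow> real" where
  "mu_t1 mu1 \<beta> l = (1 + \<beta>) * mu1 l"
definition mu_t2 :: "('l \<Rightarrow> real) \<Rightarrow> real \<Rightarrow> 'l \<Rightarrow> real" where
  "mu_t2 mu2 \<beta> l = (1 + \<beta>) * mu2 l"
definition mu_t3 :: "('l \<Rightarrow> real) \<Rightarrow> ('l \<Rightarrow> real) \<Rightarrow> real \<Rightarrow> real \<Rightarrow> 'l \<Rightarrow> real" where
  "mu_t3 mu1 mu2 \<alpha> \<beta> l = (\<alpha> + \<beta>) * (mu1 l + mu2 l)"

definition S_Lambda_Gam :: "'l measure \<Rightarrow> ('l \<Rightarrow> real) \<Rightarrow> ('l \<Rightarrow> real) \<Rightarrow> real \<Rightarrow> real \<Rightarrow> real" where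
  "S_Lambda_Gam L mu1 mu2 \<alpha> \<beta> =
     (1/2) * (\<integral>l. max (max (mu_t1 mu1 \<beta> l) (mu_t2 mu2 \<beta> l)) (mu_t3 mu1 mu2 \<alpha> \<beta> l) \<partial>L) - \<beta>"

definition omega_Lambda :: "'l measure \<Rightarrow> ('l \<Rightarrow> real) \<Rightarrow> ('l \<Rightarrow> real) \<Rightarrow> real \<Rightarrow> real \<Rightarrow> real" where
  "omega_Lambda L mu1 mu2 \<alpha> \<beta> =
     (let m1 = mu_t1 mu1 \<beta>; m2 = mu_t2 mu2 \<beta>; m3 = mu_t3 mu1 mu2 \<alpha> \<beta>;
          T1 = (\<integral>l. min (m1 l) (m2 l) \<partial>L);
          T2 = (\<integral>l. min (m1 l) (m3 l) \<partial>L) - (\<alpha> + \<beta>);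
          T3 = (\<integral>l. min (m2 l) (m3 l) \<partial>L) - (\<alpha> + \<beta>);
          T4 = (\<integral>l. min (min (m1 l) (m2 l)) (m3 l) \<partial>L)
      in T1 + T2 + T3 - T4)"

end

theory Submission
  imports Defs
begin

(* In an ontological model the payoff of a three-outcome POVM is the integral over \<lambda> of
   \<Sum>k \<xi>(k|\<lambda>) \<mu>~k(\<lambda>) - \<beta> (\<mu>(\<lambda>|\<psi>1) + \<mu>(\<lambda>|\<psi>2)), a convex combination of the \<mu>~k shifted
   by a term that integrates to 2\<beta>; it is therefore at most the integral of max \<mu>~k minus 2\<beta>.
   The formula for S_\<Lambda> in terms of \<omega>_\<Lambda> is inclusion-exclusion for the maximum of three
   numbers, integrated. *)

lemma max3_eq_inclusion_exclusion:
  fixes a b c :: "'a::linordered_ab_group_add"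
  shows "max (max a b) c = a + b + c - min a b - min a c - min b c + min (min a b) c"
  by (simp add: max_def min_def)

lemma convex_combination3_le_max3:
  fixes x0 x1 x2 a b c :: real
  assumes "0 \<le> x0" "0 \<le> x1" "0 \<le> x2" "x0 + x1 + x2 = 1"
  shows "x0 * a + x1 * b + x2 * c \<le> max (max a b) c"
proof -
  have "x0 * a + x1 * b + x2 * c
      \<le> x0 * max (max a b) c + x1 * max (max a b) c + x2 * max (max a b) c"
    using assms by (intro add_mono mult_left_mono) auto
  also have "\<dots> = max (max a b) c"
    using assms(4) by (metis distrib_right mult_1)
  finally show ?thesis .
qed

lemma integral_max3_inclusion_exclusion:
  fixes f g h :: "'a \<Rightarrow> real"
  assumes f: "integrable M f" and g: "integrable M g" and h: "integrable M h"
  shows "(\<integral>x. max (max (f x) (g x)) (h x) \<partial>M)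
       = integral\<^sup>L M f + integral\<^sup>L M g + integral\<^sup>L M h
         - (\<integral>x. min (f x) (g x) \<partial>M) - (\<integral>x. min (f x) (h x) \<partial>M)
         - (\<integral>x. min (g x) (h x) \<partial>M) + (\<integral>x. min (min (f x) (g x)) (h x) \<partial>M)"
proof -
  have "integrable M (\<lambda>x. min (f x) (g x))" "integrable M (\<lambda>x. min (f x) (h x))"
    "integrable M (\<lambda>x. min (g x) (h x))" "integrable M (\<lambda>x. min (min (f x) (g x)) (h x))"
    using f g h by auto
  with f g h show ?thesis
    unfolding max3_eq_inclusion_exclusion
    by (simp add: Bochner_Integration.integral_add Bochner_Integration.integral_diff)
qed

lemma integrable_mult_bounded_measurable:
  fixes f g :: "'a \<Rightarrow> real"
  assumes f: "integrable M f" and g: "g \<in> borel_measurable M"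
    and bound: "\<And>x. x \<in> space M \<Longrightarrow> \<bar>g x\<bar> \<le> C"
  shows "integrable M (\<lambda>x. f x * g x)"
proof (rule Bochner_Integration.integrable_bound)
  show "integrable M (\<lambda>x. C * f x)"
    using f by simp
  show "(\<lambda>x. f x * g x) \<in> borel_measurable M"
    using borel_measurable_integrable[OF f] g by measurable
  show "AE x in M. norm (f x * g x) \<le> norm (C * f x)"
  proof (rule AE_I2)
    fix x assume "x \<in> space M"
    then have "\<bar>g x\<bar> \<le> C" by (rule bound)
    then have "\<bar>f x\<bar> * \<bar>g x\<bar> \<le> \<bar>f x\<bar> * \<bar>C\<bar>"
      by (intro mult_left_mono) auto
    then show "norm (f x * g x) \<le> norm (C * f x)"
      by (simp add: abs_mult mult.commute)
  qed
qed

lemma S_Lambda_Gam_eq_one_minus_half_omega_Lambda: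
  assumes "integrable L mu1" "integral\<^sup>L L mu1 = 1"
    and "integrable L mu2" "integral\<^sup>L L mu2 = 1"
  shows "S_Lambda_Gam L mu1 mu2 \<alpha> \<beta> = 1 - omega_Lambda L mu1 mu2 \<alpha> \<beta> / 2"
proof -
  have m: "integrable L (mu_t1 mu1 \<beta>)" "integrable L (mu_t2 mu2 \<beta>)"
    "integrable L (mu_t3 mu1 mu2 \<alpha> \<beta>)"
    using assms by (simp_all add: mu_t1_def[abs_def] mu_t2_def[abs_def] mu_t3_def[abs_def])
  have "integral\<^sup>L L (mu_t1 mu1 \<beta>) = 1 + \<beta>" "integral\<^sup>L L (mu_t2 mu2 \<beta>) = 1 + \<beta>"
    "integral\<^sup>L L (mu_t3 mu1 mu2 \<alpha> \<beta>) = 2 * (\<alpha> + \<beta>)"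
    using assms
    by (simp_all add: mu_t1_def[abs_def] mu_t2_def[abs_def] mu_t3_def[abs_def]
        Bochner_Integration.integral_add)
  with integral_max3_inclusion_exclusion[OF m] show ?thesis
    unfolding S_Lambda_Gam_def omega_Lambda_def Let_def by (simp add: field_simps)
qed

lemma ontological_model_densities:
  assumes "ontological_model L mu1 mu2 xi psi1 psi2"
  shows "integrable L mu1" "integral\<^sup>L L mu1 = 1" "integrable L mu2" "integral\<^sup>L L mu2 = 1"
  using assms unfolding ontological_model_def by auto

lemma ontological_model_response:
  assumes "ontological_model L mu1 mu2 xi psi1 psi2" "is_POVM Ms"
  shows "\<And>k. k < length Ms \<Longrightarrow> xi Ms k \<in> borel_measurable L"
    and "\<And>k l. k < length Ms \<Longrightarrow> l \<in> space L \<Longrightarrow> 0 \<le> xi Ms k l"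
    and "\<And>l. l \<in> space L \<Longrightarrow> (\<Sum>k<length Ms. xi Ms k l) = 1"
  using assms unfolding ontological_model_def by auto

lemma ontological_model_prob:
  assumes "ontological_model L mu1 mu2 xi psi1 psi2" "is_POVM Ms" "1 \<le> k" "k \<le> length Ms"
  shows "prob psi1 Ms k = (\<integral>l. mu1 l * xi Ms (k - 1) l \<partial>L)"
    and "prob psi2 Ms k = (\<integral>l. mu2 l * xi Ms (k - 1) l \<partial>L)"
  using assms unfolding ontological_model_def prob_def by auto

lemma ontological_model_integrable_response:
  assumes om: "ontological_model L mu1 mu2 xi psi1 psi2" and Ms: "is_POVM Ms"
    and k: "k < length Ms"
  shows "integrable L (\<lambda>l. mu1 l * xi Ms k l)" "integrable L (\<lambda>l. mu2 l * xi Ms k l)"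
proof -
  have "\<bar>xi Ms k l\<bar> \<le> 1" if "l \<in> space L" for l
  proof -
    have "xi Ms k l \<le> (\<Sum>j<length Ms. xi Ms j l)"
      using k that ontological_model_response(2)[OF om Ms] by (intro member_le_sum) auto
    then show ?thesis
      using k that ontological_model_response(2,3)[OF om Ms] by simp
  qed
  then show "integrable L (\<lambda>l. mu1 l * xi Ms k l)" "integrable L (\<lambda>l. mu2 l * xi Ms k l)"
    using ontological_model_densities[OF om] ontological_model_response(1)[OF om Ms k]
    by (auto intro: integrable_mult_bounded_measurable)
qed

lemma gamble_payoff_has_bochner_integral:
  assumes om: "ontological_model L mu1 mu2 xi psi1 psi2"
    and Ms: "is_POVM Ms" and len: "length Ms = 3"
  shows "has_bochner_integral L
           (\<lambda>l. mu1 l * (xi Ms 0 l - \<beta> * xi Ms 1 l + \<alpha> * xi Ms 2 l)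
              + mu2 l * (xi Ms 1 l - \<beta> * xi Ms 0 l + \<alpha> * xi Ms 2 l))
           (gamble_payoff psi1 psi2 \<alpha> \<beta> Ms)"
proof -
  have p: "prob psi1 Ms k = (\<integral>l. mu1 l * xi Ms (k - 1) l \<partial>L)"
    "prob psi2 Ms k = (\<integral>l. mu2 l * xi Ms (k - 1) l \<partial>L)" if "k \<in> {1, 2, 3}" for k
    using ontological_model_prob[OF om Ms] that len by auto
  have i: "integrable L (\<lambda>l. mu1 l * xi Ms k l)" "integrable L (\<lambda>l. mu2 l * xi Ms k l)"
    if "k < 3" for k
    using ontological_model_integrable_response[OF om Ms] that len by simp_all
  show ?thesis
    unfolding has_bochner_integral_iff
    using p[of 1] p[of 2] p[of 3] i[of 0] i[of 1] i[of 2]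
    by (simp add: gamble_payoff_def algebra_simps Bochner_Integration.integral_add
        Bochner_Integration.integral_diff)
qed

lemma classical_gamble_payoff_le_max3:
  fixes x0 x1 x2 m1 m2 \<alpha> \<beta> :: real
  assumes "0 \<le> x0" "0 \<le> x1" "0 \<le> x2" "x0 + x1 + x2 = 1"
  shows "m1 * (x0 - \<beta> * x1 + \<alpha> * x2) + m2 * (x1 - \<beta> * x0 + \<alpha> * x2)
       \<le> max (max ((1 + \<beta>) * m1) ((1 + \<beta>) * m2)) ((\<alpha> + \<beta>) * (m1 + m2)) - \<beta> * (m1 + m2)"
proof -
  have "m1 * (x0 - \<beta> * x1 + \<alpha> * x2) + m2 * (x1 - \<beta> * x0 + \<alpha> * x2)
      = x0 * ((1 + \<beta>) * m1) + x1 * ((1 + \<beta>) * m2) + x2 * ((\<alpha> + \<beta>) * (m1 + m2))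
        - \<beta> * (m1 + m2) * (x0 + x1 + x2)"
    by (simp add: algebra_simps)
  also have "\<dots> \<le> max (max ((1 + \<beta>) * m1) ((1 + \<beta>) * m2)) ((\<alpha> + \<beta>) * (m1 + m2))
      - \<beta> * (m1 + m2)"
    using convex_combination3_le_max3[OF assms,
        of "(1 + \<beta>) * m1" "(1 + \<beta>) * m2" "(\<alpha> + \<beta>) * (m1 + m2)"] assms(4)
    by simp
  finally show ?thesis .
qed

lemma gamble_payoff_le_S_Lambda_Gam:
  assumes om: "ontological_model L mu1 mu2 xi psi1 psi2"
    and Ms: "is_POVM Ms" and len: "length Ms = 3"
  shows "gamble_payoff psi1 psi2 \<alpha> \<beta> Ms / 2 \<le> S_Lambda_Gam L mu1 mu2 \<alpha> \<beta>"
proof -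
  define max3 where "max3 l = max (max (mu_t1 mu1 \<beta> l) (mu_t2 mu2 \<beta> l)) (mu_t3 mu1 mu2 \<alpha> \<beta> l)"
    for l
  note payoff = gamble_payoff_has_bochner_integral[OF om Ms len, of \<beta> \<alpha>]
  note mu = ontological_model_densities[OF om]
  have "gamble_payoff psi1 psi2 \<alpha> \<beta> Ms \<le> (\<integral>l. max3 l - \<beta> * (mu1 l + mu2 l) \<partial>L)"
  proof (rule integral_mono[OF integrable.intros[OF payoff],
        unfolded has_bochner_integral_integral_eq[OF payoff]])
    show "integrable L (\<lambda>l. max3 l - \<beta> * (mu1 l + mu2 l))"
      using mu by (simp add: max3_def mu_t1_def mu_t2_def mu_t3_def)
    fix l assume l: "l \<in> space L"
    have "0 \<le> xi Ms k l" if "k < 3" for k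
      using ontological_model_response(2)[OF om Ms] that l len by simp
    moreover have "xi Ms 0 l + xi Ms 1 l + xi Ms 2 l = 1"
      using ontological_model_response(3)[OF om Ms l] len
      by (simp add: numeral_3_eq_3 numeral_2_eq_2)
    ultimately show "mu1 l * (xi Ms 0 l - \<beta> * xi Ms 1 l + \<alpha> * xi Ms 2 l)
        + mu2 l * (xi Ms 1 l - \<beta> * xi Ms 0 l + \<alpha> * xi Ms 2 l)
        \<le> max3 l - \<beta> * (mu1 l + mu2 l)"
      unfolding max3_def mu_t1_def mu_t2_def mu_t3_def
      by (intro classical_gamble_payoff_le_max3) auto
  qed
  also have "\<dots> = (\<integral>l. max3 l \<partial>L) - 2 * \<beta>"
    using mu by (simp add: max3_def mu_t1_def mu_t2_def mu_t3_def Bochner_Integration.integral_add)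
  finally show ?thesis
    unfolding S_Lambda_Gam_def max3_def by simp
qed

lemma is_POVM_trivial: "is_POVM ([mat 1, 0, 0] :: (complex ^ 'n::finite ^ 'n) list)"
proof -
  have "psd (mat 1 :: complex ^ 'n ^ 'n)"
    unfolding psd_def expval_def cinner_vec_def
    by (auto simp: matrix_vector_mul_lid Im_sum Re_sum intro!: sum_nonneg sum.neutral)
  moreover have "psd (0 :: complex ^ 'n ^ 'n)"
    unfolding psd_def expval_def cinner_vec_def
    by (simp add: matrix_vector_mult_def)
  ultimately show ?thesis
    unfolding is_POVM_def by auto
qed

lemma S_Q_Gam_le_S_Lambda_Gam:
  fixes psi1 psi2 :: "complex ^ 'n::finite"
  assumes "ontological_model L mu1 mu2 xi psi1 psi2"
  shows "S_Q_Gam psi1 psi2 \<alpha> \<beta> \<le> S_Lambda_Gam L mu1 mu2 \<alpha> \<beta>"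
proof -
  have "Sup {gamble_payoff psi1 psi2 \<alpha> \<beta> Ms | Ms. is_POVM Ms \<and> length Ms = 3}
      \<le> 2 * S_Lambda_Gam L mu1 mu2 \<alpha> \<beta>"
  proof (rule cSup_least)
    show "{gamble_payoff psi1 psi2 \<alpha> \<beta> Ms | Ms. is_POVM Ms \<and> length Ms = 3} \<noteq> {}"
      using is_POVM_trivial[where 'n='n] by fastforce
  next
    fix x assume "x \<in> {gamble_payoff psi1 psi2 \<alpha> \<beta> Ms | Ms. is_POVM Ms \<and> length Ms = 3}"
    then obtain Ms where "x = gamble_payoff psi1 psi2 \<alpha> \<beta> Ms" "is_POVM Ms" "length Ms = 3"
      by blast
    with gamble_payoff_le_S_Lambda_Gam[OF assms, of Ms \<alpha> \<beta>]
    show "x \<le> 2 * S_Lambda_Gam L mu1 mu2 \<alpha> \<beta>"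
      by simp
  qed
  then show ?thesis
    unfolding S_Q_Gam_def by simp
qed

theorem theorem1:
  fixes psi1 psi2 :: "complex ^ 'n::finite"
    and L :: "'l measure" and mu1 mu2 :: "'l \<Rightarrow> real"
    and xi :: "(complex ^ 'n ^ 'n) list \<Rightarrow> nat \<Rightarrow> 'l \<Rightarrow> real"
    and \<alpha> \<beta> :: real
  assumes "pure_state psi1" and "pure_state psi2"
    and "0 \<le> \<alpha>" and "\<alpha> \<le> 1" and "0 \<le> \<beta>" and "\<beta> \<le> 1"
    and "ontological_model L mu1 mu2 xi psi1 psi2"
  shows "S_Q_Gam psi1 psi2 \<alpha> \<beta> \<le> S_Lambda_Gam L mu1 mu2 \<alpha> \<beta>
       \<and> S_Lambda_Gam L mu1 mu2 \<alpha> \<beta> = 1 - omega_Lambda L mu1 mu2 \<alpha> \<beta> / 2"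
  using S_Q_Gam_le_S_Lambda_Gam[OF assms(7)]
    S_Lambda_Gam_eq_one_minus_half_omega_Lambda[OF ontological_model_densities[OF assms(7)]]
  by simp

end
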